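(* Let $G$ and $H$ be finite abelian groups, written additively, of the same even order $k$, and let $f:G\to H$ be semi-planar. If $S(G,H;f)$ splits into two substructures, then each of the two substructures is divisible.
   Context: A function $f:G\to H$ is semi-planar if for every non-identity $a\in G$ and every $y\in H$, the equation $f(x+a)-f(x)=y$ has either $0$ or $2$ solutions $x\in G$. The incidence structure $S(G,H;f)$ has points $(x,y)\in G\times H$ and lines $\mathcal{L}(a,b)$ for $(a,b)\in G\times H$, with $(x,y)$ incident with $\mathcal{L}(a,b)$ iff $y=f(x-a)+b$. Its incidence graph is the bipartite graph on points and lines with an edge for each incident point-line pair. $S(G,H;f)$ splits into two substructures if its incidence graph has exactly two connected components; the substructures are the incidence structures formed by the points and lines of each component (each consists of $k^2/2$ points and $k^2/2$ lines). An incidence structure is divisible if its points can be partitioned into classes such that two distinct points from the same class lie on no common line and two points from different classes lie on exactly two common lines. *)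

theory Defs
  imports Main "HOL-Library.Disjoint_Sets"
begin

definition semi_planar :: "('a::{finite,ab_group_add} \<Rightarrow> 'b::{finite,ab_group_add}) \<Rightarrow> bool" where
  "semi_planar f \<longleftrightarrow>
     (\<forall>a. a \<noteq> 0 \<longrightarrow> (\<forall>y. card {x. f (x + a) - f x = y} \<in> {0, 2}))"

definition incident :: "('a::ab_group_add \<Rightarrow> 'b::ab_group_add) \<Rightarrow> 'a \<times> 'b \<Rightarrow> 'a \<times> 'b \<Rightarrow> bool" where
  "incident f p L \<longleftrightarrow> snd p = f (fst p - fst L) + snd L"

definition inc_edge :: "('a::ab_group_add \<Rightarrow> 'b::ab_group_add) \<Rightarrow>
    ('a \<times> 'b) + ('a \<times> 'b) \<Rightarrow> ('a \<times> 'b) + ('a \<times> 'b) \<Rightarrow> bool" where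
  "inc_edge f u v \<longleftrightarrow>
     (\<exists>p L. (u = Inl p \<and> v = Inr L \<or> u = Inr L \<and> v = Inl p) \<and> incident f p L)"

definition inc_components :: "('a::ab_group_add \<Rightarrow> 'b::ab_group_add) \<Rightarrow>
    (('a \<times> 'b) + ('a \<times> 'b)) set set" where
  "inc_components f = UNIV // {(u, v). (inc_edge f)\<^sup>*\<^sup>* u v}"

definition splits_into_two :: "('a::ab_group_add \<Rightarrow> 'b::ab_group_add) \<Rightarrow> bool" where
  "splits_into_two f \<longleftrightarrow> card (inc_components f) = 2"

definition divisible :: "'p set \<Rightarrow> 'l set \<Rightarrow> ('p \<Rightarrow> 'l \<Rightarrow> bool) \<Rightarrow> bool" where
  "divisible P B I \<longleftrightarrow>
     (\<exists>C. partition_on P C \<and>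
        (\<forall>c\<in>C. \<forall>p\<in>c. \<forall>q\<in>c. p \<noteq> q \<longrightarrow> {L\<in>B. I p L \<and> I q L} = {}) \<and>
        (\<forall>c\<in>C. \<forall>d\<in>C. c \<noteq> d \<longrightarrow> (\<forall>p\<in>c. \<forall>q\<in>d. card {L\<in>B. I p L \<and> I q L} = 2)))"

definition sub_divisible :: "('a::ab_group_add \<Rightarrow> 'b::ab_group_add) \<Rightarrow>
    (('a \<times> 'b) + ('a \<times> 'b)) set \<Rightarrow> bool" where
  "sub_divisible f K \<longleftrightarrow> divisible {p. Inl p \<in> K} {L. Inr L \<in> K} (incident f)"

end

theory Submission
  imports Defs "HOL-Library.Product_Plus" "HOL-Library.Cardinality"
begin

text \<open>Translating points and lines by the same element of \<open>G \<times> H\<close> preserves incidence, so the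
  points reachable from a point \<open>p\<close> in the incidence graph are \<open>p + T\<close> for a fixed set \<open>T\<close> of
  differences, closed under subtraction; with two components, \<open>2 |T| \<le> k\<^sup>2\<close>. The points of
  \<open>p + T\<close> on the vertical line through \<open>p\<close> number \<open>|T \<inter> ({0} \<times> H)| \<ge> |T| / k\<close>, so at most
  \<open>(k-1) k / 2\<close> points of the component have first coordinate different from that of \<open>p\<close>.
  Semi-planarity says that exactly \<open>(k-1) k / 2\<close> points share a line with \<open>p\<close>, each of them on
  exactly two lines with \<open>p\<close>, and all of them lie in this set. Hence the two sets coincide and
  the vertical lines partition each component into the classes of a divisible structure.\<close>

lemma mem_translate_image_iff:
  fixes p :: "'a::ab_group_add"
  shows "q \<in> (+) p ` Y \<longleftrightarrow> q - p \<in> Y"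
  by (metis add.commute diff_add_cancel add_diff_cancel_left' image_iff)

abbreviation reachable :: "('a::ab_group_add \<Rightarrow> 'b::ab_group_add) \<Rightarrow>
    ('a \<times> 'b) + ('a \<times> 'b) \<Rightarrow> ('a \<times> 'b) + ('a \<times> 'b) \<Rightarrow> bool" where
  "reachable f \<equiv> (inc_edge f)\<^sup>*\<^sup>*"

definition reach_diffs :: "('a::ab_group_add \<Rightarrow> 'b::ab_group_add) \<Rightarrow> ('a \<times> 'b) set" where
  "reach_diffs f = {t. reachable f (Inl 0) (Inl t)}"

lemma inc_edge_sym: "inc_edge f u v \<Longrightarrow> inc_edge f v u"
  unfolding inc_edge_def by blast

lemma reachable_sym: "reachable f u v \<Longrightarrow> reachable f v u"
  by (induction rule: rtranclp_induct)
     (auto intro: converse_rtranclp_into_rtranclp inc_edge_sym)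

lemma reachable_class_eq:
  assumes "reachable f u v"
  shows "{w. reachable f u w} = {w. reachable f v w}"
  using assms reachable_sym by (blast intro: rtranclp_trans)

lemma inc_edge_incident: "incident f p L \<Longrightarrow> inc_edge f (Inl p) (Inr L)"
  unfolding inc_edge_def by blast

lemma reachable_common_line:
  assumes "incident f p L" and "incident f q L"
  shows "reachable f (Inl p) (Inl q)"
  using inc_edge_incident[OF assms(1)] inc_edge_sym[OF inc_edge_incident[OF assms(2)]]
  by (meson r_into_rtranclp rtranclp_trans)

lemma inc_edge_translate:
  assumes "inc_edge f u v"
  shows "inc_edge f (map_sum (\<lambda>p. p + t) (\<lambda>L. L + t) u) (map_sum (\<lambda>p. p + t) (\<lambda>L. L + t) v)"
proof -
  obtain p L where uv: "u = Inl p \<and> v = Inr L \<or> u = Inr L \<and> v = Inl p" and "incident f p L"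
    using assms unfolding inc_edge_def by blast
  then have "incident f (p + t) (L + t)" by (simp add: incident_def algebra_simps)
  with uv show ?thesis unfolding inc_edge_def by (auto simp del: split_paired_Ex)
qed

lemma reachable_translate:
  assumes "reachable f u v"
  shows "reachable f (map_sum (\<lambda>p. p + t) (\<lambda>L. L + t) u) (map_sum (\<lambda>p. p + t) (\<lambda>L. L + t) v)"
  using assms
  by (induction rule: rtranclp_induct) (auto intro: rtranclp.rtrancl_into_rtrancl inc_edge_translate)

lemma reachable_Inl_iff: "reachable f (Inl p) (Inl q) \<longleftrightarrow> q - p \<in> reach_diffs f"
  unfolding reach_diffs_def
  using reachable_translate[of f "Inl p" "Inl q" "- p"] reachable_translate[of f "Inl 0" "Inl (q - p)" p]
  by auto

lemma reach_diffs_diff_closed: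
  assumes "s \<in> reach_diffs f" and "t \<in> reach_diffs f"
  shows "t - s \<in> reach_diffs f"
proof -
  have "reachable f (Inl s) (Inl 0)" and "reachable f (Inl 0) (Inl t)"
    using assms reachable_sym unfolding reach_diffs_def by blast+
  then show ?thesis using reachable_Inl_iff by (metis rtranclp_trans)
qed

lemma inc_components_point_class:
  assumes "K \<in> inc_components f"
  obtains p where "K = {v. reachable f (Inl p) v}"
proof -
  from assms obtain u where K: "K = {v. reachable f u v}"
    unfolding inc_components_def quotient_def by auto
  obtain p where up: "reachable f u (Inl p)"
  proof (cases u)
    case (Inl p)
    then show ?thesis using that by blast
  next
    case (Inr L)
    have "inc_edge f (Inr L) (Inl (fst L, f 0 + snd L))"
      unfolding inc_edge_def incident_def by auto
    then show ?thesis using that Inr by blast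
  qed
  show ?thesis
    using that K reachable_class_eq[OF up] by blast
qed

lemma card_reachable_points:
  fixes f :: "'a::{finite,ab_group_add} \<Rightarrow> 'b::{finite,ab_group_add}"
  shows "card {q. reachable f (Inl p) (Inl q)} = card (reach_diffs f)"
proof -
  have "{q. reachable f (Inl p) (Inl q)} = (+) p ` reach_diffs f"
    by (simp add: set_eq_iff mem_translate_image_iff reachable_Inl_iff)
  then show ?thesis by (simp add: card_image)
qed

lemma card_reachable_points_same_fst:
  fixes f :: "'a::{finite,ab_group_add} \<Rightarrow> 'b::{finite,ab_group_add}"
  shows "card {q. reachable f (Inl p) (Inl q) \<and> fst q = fst p} = card {h. (0, h) \<in> reach_diffs f}"
proof -
  have "{q. reachable f (Inl p) (Inl q) \<and> fst q = fst p} = (+) p ` ({0} \<times> {h. (0, h) \<in> reach_diffs f})"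
  proof (rule set_eqI)
    fix q
    have "q - p = (fst q - fst p, snd q - snd p)" by (simp add: prod_eq_iff)
    then show "q \<in> {q. reachable f (Inl p) (Inl q) \<and> fst q = fst p} \<longleftrightarrow>
               q \<in> (+) p ` ({0} \<times> {h. (0, h) \<in> reach_diffs f})"
      by (auto simp: mem_translate_image_iff reachable_Inl_iff)
  qed
  then show ?thesis by (simp add: card_image card_cartesian_product)
qed

lemma two_card_reach_diffs_le:
  fixes f :: "'a::{finite,ab_group_add} \<Rightarrow> 'b::{finite,ab_group_add}"
  assumes "splits_into_two f"
  shows "2 * card (reach_diffs f) \<le> CARD('a) * CARD('b)"
proof -
  obtain K1 K2 where KK: "inc_components f = {K1, K2}" "K1 \<noteq> K2"
    using assms unfolding splits_into_two_def card_2_iff by blast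
  have "K1 \<in> inc_components f" and "K2 \<in> inc_components f"
    using KK(1) by simp_all
  then obtain p1 p2 where p1: "K1 = {v. reachable f (Inl p1) v}"
    and p2: "K2 = {v. reachable f (Inl p2) v}"
    by (metis inc_components_point_class)
  have "\<not> reachable f (Inl p1) (Inl p2)"
    using KK(2) reachable_class_eq[of f "Inl p1" "Inl p2"] unfolding p1 p2 by blast
  then have disj: "{q. reachable f (Inl p1) (Inl q)} \<inter> {q. reachable f (Inl p2) (Inl q)} = {}"
    using reachable_sym rtranclp_trans[of "inc_edge f" "Inl p1" _ "Inl p2"] by blast
  have "2 * card (reach_diffs f) =
        card ({q. reachable f (Inl p1) (Inl q)} \<union> {q. reachable f (Inl p2) (Inl q)})"
    using card_Un_disjoint[OF _ _ disj] by (simp add: card_reachable_points)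
  also have "\<dots> \<le> card (UNIV :: ('a \<times> 'b) set)"
    by (rule card_mono) auto
  also have "\<dots> = CARD('a) * CARD('b)"
    by (simp add: UNIV_Times_UNIV[symmetric] card_cartesian_product del: UNIV_Times_UNIV)
  finally show ?thesis .
qed

text \<open>Subtracting a chosen element of \<open>T\<close> above each first coordinate injects \<open>T\<close> into
  \<open>G \<times> {h. (0, h) \<in> T}\<close>.\<close>

lemma card_le_card_times_vertical:
  fixes T :: "('a::{finite,ab_group_add} \<times> 'b::{finite,ab_group_add}) set"
  assumes diff_closed: "\<And>s t. s \<in> T \<Longrightarrow> t \<in> T \<Longrightarrow> t - s \<in> T"
  shows "card T \<le> CARD('a) * card {h. (0, h) \<in> T}"
proof -
  define base where "base g = (SOME h. (g, h) \<in> T)" for g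
  define \<phi> where "\<phi> t = (fst t, snd t - base (fst t))" for t
  have "inj_on \<phi> T" unfolding \<phi>_def inj_on_def by (auto simp: prod_eq_iff)
  moreover have "\<phi> ` T \<subseteq> UNIV \<times> {h. (0, h) \<in> T}"
  proof (rule image_subsetI)
    fix t assume t: "t \<in> T"
    have "(fst t, base (fst t)) \<in> T" unfolding base_def
      by (rule someI[of _ "snd t"]) (use t in simp)
    then have "t - (fst t, base (fst t)) \<in> T" using diff_closed t by blast
    moreover have "t - (fst t, base (fst t)) = (0, snd t - base (fst t))" by (simp add: prod_eq_iff)
    ultimately show "\<phi> t \<in> UNIV \<times> {h. (0, h) \<in> T}" unfolding \<phi>_def by simp
  qed
  ultimately have "card T \<le> card ((UNIV :: 'a set) \<times> {h. (0, h) \<in> T})"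
    by (rule card_inj_on_le) auto
  then show ?thesis by (simp add: card_cartesian_product)
qed

subsection \<open>Common lines and semi-planarity\<close>

lemma no_common_line_same_fst:
  assumes "fst p = fst q" and "p \<noteq> q"
  shows "\<not> (incident f p L \<and> incident f q L)"
  using assms unfolding incident_def by (auto simp: prod_eq_iff)

text \<open>A line through \<open>p\<close> is \<open>L(fst p - u, snd p - f u)\<close>; it passes through \<open>q\<close> iff
  \<open>u\<close> solves the difference equation for \<open>a = fst q - fst p\<close>.\<close>

lemma card_common_lines:
  fixes f :: "'a::{finite,ab_group_add} \<Rightarrow> 'b::{finite,ab_group_add}"
  shows "card {L. incident f p L \<and> incident f q L} =
         card {u. f (u + (fst q - fst p)) - f u = snd q - snd p}"
proof -
  have "{L. incident f p L \<and> incident f q L} =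
        (\<lambda>u. (fst p - u, snd p - f u)) ` {u. f (u + (fst q - fst p)) - f u = snd q - snd p}"
  proof (rule set_eqI, rule iffI)
    fix L assume "L \<in> {L. incident f p L \<and> incident f q L}"
    then show "L \<in> (\<lambda>u. (fst p - u, snd p - f u)) ` {u. f (u + (fst q - fst p)) - f u = snd q - snd p}"
      unfolding incident_def
      by (intro image_eqI[where x = "fst p - fst L"]) (auto simp: algebra_simps prod_eq_iff)
  qed (auto simp: incident_def algebra_simps)
  moreover have "inj (\<lambda>u. (fst p - u, snd p - f u))" by (auto simp: inj_def)
  ultimately show ?thesis by (simp add: card_image inj_on_subset)
qed

lemma semi_planar_card_common_lines:
  assumes "semi_planar f" and "fst p \<noteq> fst q"
  shows "card {L. incident f p L \<and> incident f q L} \<in> {0, 2}"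
  using assms unfolding card_common_lines semi_planar_def by simp

lemma two_card_fibres_eq_two:
  fixes g :: "'a::finite \<Rightarrow> 'b::finite"
  assumes "\<And>y. card {x. g x = y} \<in> {0, 2}"
  shows "2 * card {y. card {x. g x = y} = 2} = CARD('a)"
proof -
  have "(\<Union>y. {x. g x = y}) = UNIV" by auto
  then have "CARD('a) = card (\<Union>y. {x. g x = y})" by simp
  also have "\<dots> = (\<Sum>y\<in>UNIV. card {x. g x = y})"
    by (rule card_UN_disjoint) auto
  also have "\<dots> = (\<Sum>y\<in>{y. card {x. g x = y} = 2}. card {x. g x = y})"
    by (rule sum.mono_neutral_right) (use assms in auto)
  also have "\<dots> = (\<Sum>y\<in>{y. card {x. g x = y} = 2}. 2)"
    by (rule sum.cong) auto
  finally show ?thesis by simp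
qed

lemma card_collinear_points:
  fixes f :: "'a::{finite,ab_group_add} \<Rightarrow> 'b::{finite,ab_group_add}"
  assumes sp: "semi_planar f"
  shows "2 * card {q. q \<noteq> p \<and> (\<exists>L. incident f p L \<and> incident f q L)} = (CARD('a) - 1) * CARD('a)"
proof -
  define W where "W = Sigma (- {0}) (\<lambda>a. {y. card {x. f (x + a) - f x = y} = 2})"
  have fibres: "card {x. f (x + a) - f x = y} \<in> {0, 2}" if "a \<noteq> 0" for a y
    using sp that unfolding semi_planar_def by blast
  have "{q. q \<noteq> p \<and> (\<exists>L. incident f p L \<and> incident f q L)} = (+) p ` W"
  proof (rule set_eqI)
    fix q
    have "q - p = (fst q - fst p, snd q - snd p)" by (simp add: prod_eq_iff)
    then have W_iff: "q - p \<in> W \<longleftrightarrow> fst q \<noteq> fst p \<and> card {L. incident f p L \<and> incident f q L} = 2"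
      unfolding W_def card_common_lines by simp
    have "q \<noteq> p \<and> (\<exists>L. incident f p L \<and> incident f q L) \<longleftrightarrow> q - p \<in> W"
    proof (cases "fst q = fst p")
      case True
      then show ?thesis
        using no_common_line_same_fst[of q p f] W_iff by blast
    next
      case False
      have "(\<exists>L. incident f p L \<and> incident f q L) \<longleftrightarrow> card {L. incident f p L \<and> incident f q L} \<noteq> 0"
        by (simp add: card_eq_0_iff)
      also have "\<dots> \<longleftrightarrow> card {L. incident f p L \<and> incident f q L} = 2"
        using semi_planar_card_common_lines[OF sp, of p q] False
        by (metis empty_iff insert_iff zero_neq_numeral)
      finally show ?thesis
        using False W_iff by auto
    qed
    then show "q \<in> {q. q \<noteq> p \<and> (\<exists>L. incident f p L \<and> incident f q L)} \<longleftrightarrow> q \<in> (+) p ` W"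
      by (simp add: mem_translate_image_iff)
  qed
  then have "card {q. q \<noteq> p \<and> (\<exists>L. incident f p L \<and> incident f q L)} = card W"
    by (simp add: card_image)
  moreover have "2 * card W = (\<Sum>a\<in>- {0::'a}. 2 * card {y. card {x. f (x + a) - f x = y} = 2})"
    unfolding W_def by (simp add: card_SigmaI sum_distrib_left)
  moreover have "\<dots> = (\<Sum>a\<in>- {0::'a}. CARD('a))"
  proof (rule sum.cong)
    fix a :: 'a assume "a \<in> - {0}"
    then show "2 * card {y. card {x. f (x + a) - f x = y} = 2} = CARD('a)"
      using two_card_fibres_eq_two[of "\<lambda>x. f (x + a) - f x"] fibres by simp
  qed simp
  moreover have "\<dots> = (CARD('a) - 1) * CARD('a)"
    by (simp add: Compl_eq_Diff_UNIV card_Diff_singleton)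
  ultimately show ?thesis by simp
qed

subsection \<open>The collinear points of a point fill its component off the vertical line\<close>

lemma two_card_component_off_vertical_le:
  fixes f :: "'a::{finite,ab_group_add} \<Rightarrow> 'b::{finite,ab_group_add}"
  assumes "CARD('a) = CARD('b)" and "splits_into_two f"
  shows "2 * card {q. reachable f (Inl p) (Inl q) \<and> fst q \<noteq> fst p} \<le> (CARD('a) - 1) * CARD('a)"
    (is "2 * card ?A \<le> _")
proof -
  define k where "k = CARD('a)"
  define t where "t = card (reach_diffs f)"
  define s where "s = card {h. (0, h) \<in> reach_diffs f}"
  have "card ?A + s = t"
  proof -
    have "{q. reachable f (Inl p) (Inl q)} = ?A \<union> {q. reachable f (Inl p) (Inl q) \<and> fst q = fst p}"
      by auto
    then show ?thesis unfolding s_def t_def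
      using card_reachable_points[of f p] card_reachable_points_same_fst[of f p]
      by (simp add: card_Un_disjoint disjoint_iff)
  qed
  then have "k * card ?A + k * s = k * t"
    by (metis add_mult_distrib2)
  moreover have "t \<le> k * s"
    unfolding t_def s_def k_def by (rule card_le_card_times_vertical) (rule reach_diffs_diff_closed)
  ultimately have "k * card ?A \<le> (k - 1) * t"
    by (simp add: diff_mult_distrib)
  then have "k * (2 * card ?A) \<le> (k - 1) * (2 * t)"
    by simp
  also have "\<dots> \<le> k * ((k - 1) * k)"
    using two_card_reach_diffs_le[OF assms(2)] assms(1) unfolding t_def k_def by simp
  finally show ?thesis
    unfolding k_def by simp
qed

lemma collinear_points_eq_component:
  fixes f :: "'a::{finite,ab_group_add} \<Rightarrow> 'b::{finite,ab_group_add}"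
  assumes "CARD('a) = CARD('b)" and "semi_planar f" and "splits_into_two f"
  shows "{q. q \<noteq> p \<and> (\<exists>L. incident f p L \<and> incident f q L)} =
         {q. reachable f (Inl p) (Inl q) \<and> fst q \<noteq> fst p}"
proof (rule card_seteq)
  show "{q. q \<noteq> p \<and> (\<exists>L. incident f p L \<and> incident f q L)} \<subseteq>
        {q. reachable f (Inl p) (Inl q) \<and> fst q \<noteq> fst p}"
    using reachable_common_line no_common_line_same_fst by blast
  show "card {q. reachable f (Inl p) (Inl q) \<and> fst q \<noteq> fst p} \<le>
        card {q. q \<noteq> p \<and> (\<exists>L. incident f p L \<and> incident f q L)}"
    using two_card_component_off_vertical_le[OF assms(1,3), of p] card_collinear_points[OF assms(2), of p]
    by simp
qed simp

lemma card_common_lines_reachable: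
  fixes f :: "'a::{finite,ab_group_add} \<Rightarrow> 'b::{finite,ab_group_add}"
  assumes "CARD('a) = CARD('b)" and "semi_planar f" and "splits_into_two f"
    and "reachable f (Inl p) (Inl q)" and "fst p \<noteq> fst q"
  shows "card {L. incident f p L \<and> incident f q L} = 2"
proof -
  have "q \<in> {q. reachable f (Inl p) (Inl q) \<and> fst q \<noteq> fst p}"
    using assms(4,5) by simp
  then have "{L. incident f p L \<and> incident f q L} \<noteq> {}"
    unfolding collinear_points_eq_component[OF assms(1-3), symmetric] by blast
  then show ?thesis
    using semi_planar_card_common_lines[OF assms(2,5)]
    by (metis card_eq_0_iff empty_iff finite insert_iff)
qed

lemma divisible_by_fibres:
  assumes "\<And>p q. p \<in> P \<Longrightarrow> q \<in> P \<Longrightarrow> g p = g q \<Longrightarrow> p \<noteq> q \<Longrightarrow> {L \<in> B. I p L \<and> I q L} = {}"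
    and "\<And>p q. p \<in> P \<Longrightarrow> q \<in> P \<Longrightarrow> g p \<noteq> g q \<Longrightarrow> card {L \<in> B. I p L \<and> I q L} = 2"
  shows "divisible P B I"
  unfolding divisible_def
proof (intro exI[of _ "(\<lambda>x. {p \<in> P. g p = x}) ` g ` P"] conjI ballI impI)
  show "partition_on P ((\<lambda>x. {p \<in> P. g p = x}) ` g ` P)"
    unfolding partition_on_def disjoint_def by auto
next
  fix c p q assume "c \<in> (\<lambda>x. {p \<in> P. g p = x}) ` g ` P" "p \<in> c" "q \<in> c" "p \<noteq> q"
  then have "p \<in> P" "q \<in> P" "g p = g q" by auto
  then show "{L \<in> B. I p L \<and> I q L} = {}"
    using assms(1) \<open>p \<noteq> q\<close> by simp
next
  fix c d p q
  assume "c \<in> (\<lambda>x. {p \<in> P. g p = x}) ` g ` P" "d \<in> (\<lambda>x. {p \<in> P. g p = x}) ` g ` P"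
    and "c \<noteq> d" "p \<in> c" "q \<in> d"
  then have "p \<in> P" "q \<in> P" "g p \<noteq> g q" by auto
  then show "card {L \<in> B. I p L \<and> I q L} = 2"
    by (rule assms(2))
qed

theorem theorem1:
  fixes f :: "'a::{finite,ab_group_add} \<Rightarrow> 'b::{finite,ab_group_add}"
  assumes "card (UNIV::'a set) = card (UNIV::'b set)"
    and "even (card (UNIV::'a set))"
    and "semi_planar f"
    and "splits_into_two f"
  shows "\<forall>K \<in> inc_components f. sub_divisible f K"
proof
  fix K assume "K \<in> inc_components f"
  then obtain p0 where K: "K = {v. reachable f (Inl p0) v}"
    by (rule inc_components_point_class)
  define P where "P = {p. reachable f (Inl p0) (Inl p)}"
  have lines_of_K: "{L \<in> {L. Inr L \<in> K}. incident f p L \<and> incident f q L} =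
                    {L. incident f p L \<and> incident f q L}" if "p \<in> P" for p q
    using that inc_edge_incident unfolding K P_def by (blast intro: rtranclp.rtrancl_into_rtrancl)
  have collinear: "card {L \<in> {L. Inr L \<in> K}. incident f p L \<and> incident f q L} = 2"
    if "p \<in> P" "q \<in> P" "fst p \<noteq> fst q" for p q
  proof -
    have "reachable f (Inl p) (Inl q)"
      using that(1,2) reachable_class_eq[of f "Inl p0" "Inl p"] unfolding P_def by blast
    then show ?thesis
      using card_common_lines_reachable[OF assms(1,3,4)] that(3) lines_of_K[OF that(1)] by simp
  qed
  have "divisible P {L. Inr L \<in> K} (incident f)"
  proof (rule divisible_by_fibres[where g = fst])
    fix p q :: "'a \<times> 'b" assume "fst p = fst q" "p \<noteq> q"
    then show "{L \<in> {L. Inr L \<in> K}. incident f p L \<and> incident f q L} = {}"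
      using no_common_line_same_fst by blast
  qed (rule collinear)
  moreover have "{p. Inl p \<in> K} = P"
    unfolding K P_def by simp
  ultimately show "sub_divisible f K"
    unfolding sub_divisible_def by simp
qed

end
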